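(* Let $G$ be a 5-vertex-critical $(P_5,\text{chair})$-free graph that is not isomorphic to any graph in $\mathcal{F}=\{K_5,W,P,Q_1,Q_2,Q_3\}$, and let $C=v_1v_2v_3v_4v_5v_1$ be an induced $C_5$ in $G$. Then $|S_4(i)|\le 6$ for all $1\le i\le 5$.
   Context: All graphs are finite and simple; $P_5$ is the path on 5 vertices; the chair is a $P_4$ plus a vertex adjacent to exactly one of the two middle vertices of the $P_4$; "$H$-free" means no induced subgraph isomorphic to $H$; $G$ is $k$-vertex-critical if $\chi(G)=k$ and $\chi(G-v)<k$ for all $v$. Indices modulo 5. $S_4(i)=\{v\in V(G)\setminus V(C): N(v)\cap V(C)=\{v_{i-2},v_{i-1},v_{i+1},v_{i+2}\}\}$. The graphs of $\mathcal{F}$ (other than $K_5$) are given by adjacency lists on vertex sets $\{0,\dots,n-1\}$: $W$: 0:1 4 5 6; 1:0 2 5 6; 2:1 3 5 6; 3:2 4 5 6; 4:0 3 5 6; 5:0 1 2 3 4 6; 6:0 1 2 3 4 5. $P$: 0:1 4 5 6; 1:0 2 7 8; 2:1 3 5 6 7 8; 3:2 4 5 6 7 8; 4:0 3 7 8; 5:0 2 3 7; 6:0 2 3 8; 7:1 2 3 4 5 8; 8:1 2 3 4 6 7. $Q_1$: 0:1 4 5 6; 1:0 2 5 6 7 8; 2:1 3 5 6 7 8; 3:2 4 7 8; 4:0 3 7 8; 5:0 1 2 6 7; 6:0 1 2 5 8; 7:1 2 3 4 5; 8:1 2 3 4 6. $Q_2$: 0:1 4 5 6; 1:0 2 5 6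 7 8; 2:1 3 5 6 7 8; 3:2 4 5 6 7 8; 4:0 3 7 8; 5:0 2 3 6 7; 6:0 2 3 5 8; 7:1 2 3 4 5; 8:1 2 3 4 6. $Q_3$: 0:1 4 5 6; 1:0 2 5 7 8; 2:1 3 5 7 8; 3:2 4 6 7 8; 4:0 3 6 7 8; 5:0 1 2 6; 6:0 3 4 5 8; 7:1 2 3 4 8; 8:1 2 3 4 6 7. *)

theory Defs
  imports Main
begin

definition simple_graph :: "'a set \<Rightarrow> ('a \<Rightarrow> 'a \<Rightarrow> bool) \<Rightarrow> bool" where
  "simple_graph V E \<longleftrightarrow> finite V \<and> (\<forall>x y. E x y \<longrightarrow> x \<in> V \<and> y \<in> V)
     \<and> (\<forall>x y. E x y \<longrightarrow> E y x) \<and> (\<forall>x. \<not> E x x)"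

definition adj_list :: "nat list list \<Rightarrow> nat \<Rightarrow> nat \<Rightarrow> bool" where
  "adj_list L i j \<longleftrightarrow> (i < length L \<and> j < length L \<and> (j \<in> set (L ! i) \<or> i \<in> set (L ! j)))"

definition verts_list :: "nat list list \<Rightarrow> nat set" where
  "verts_list L = {0..<length L}"

definition contains_induced ::
  "'a set \<Rightarrow> ('a \<Rightarrow> 'a \<Rightarrow> bool) \<Rightarrow> 'b set \<Rightarrow> ('b \<Rightarrow> 'b \<Rightarrow> bool) \<Rightarrow> bool" where
  "contains_induced V E HV HE \<longleftrightarrow>
     (\<exists>f. inj_on f HV \<and> f ` HV \<subseteq> V \<and> (\<forall>x\<in>HV. \<forall>y\<in>HV. E (f x) (f y) \<longleftrightarrow> HE x y))"

definition H_free ::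
  "'a set \<Rightarrow> ('a \<Rightarrow> 'a \<Rightarrow> bool) \<Rightarrow> 'b set \<Rightarrow> ('b \<Rightarrow> 'b \<Rightarrow> bool) \<Rightarrow> bool" where
  "H_free V E HV HE \<longleftrightarrow> \<not> contains_induced V E HV HE"

definition graph_iso ::
  "'a set \<Rightarrow> ('a \<Rightarrow> 'a \<Rightarrow> bool) \<Rightarrow> 'b set \<Rightarrow> ('b \<Rightarrow> 'b \<Rightarrow> bool) \<Rightarrow> bool" where
  "graph_iso V E HV HE \<longleftrightarrow>
     (\<exists>f. bij_betw f V HV \<and> (\<forall>x\<in>V. \<forall>y\<in>V. E x y \<longleftrightarrow> HE (f x) (f y)))"

definition colorable :: "'a set \<Rightarrow> ('a \<Rightarrow> 'a \<Rightarrow> bool) \<Rightarrow> nat \<Rightarrow> bool" where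
  "colorable V E k \<longleftrightarrow>
     (\<exists>c :: 'a \<Rightarrow> nat. (\<forall>v\<in>V. c v < k) \<and> (\<forall>u\<in>V. \<forall>v\<in>V. E u v \<longrightarrow> c u \<noteq> c v))"

definition chromatic_number :: "'a set \<Rightarrow> ('a \<Rightarrow> 'a \<Rightarrow> bool) \<Rightarrow> nat" where
  "chromatic_number V E = (LEAST k. colorable V E k)"

definition del_vertex_adj :: "('a \<Rightarrow> 'a \<Rightarrow> bool) \<Rightarrow> 'a \<Rightarrow> 'a \<Rightarrow> 'a \<Rightarrow> bool" where
  "del_vertex_adj E v x y \<longleftrightarrow> E x y \<and> x \<noteq> v \<and> y \<noteq> v"

definition vertex_critical :: "'a set \<Rightarrow> ('a \<Rightarrow> 'a \<Rightarrow> bool) \<Rightarrow> nat \<Rightarrow> bool" where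
  "vertex_critical V E k \<longleftrightarrow> chromatic_number V E = k \<and>
     (\<forall>v\<in>V. chromatic_number (V - {v}) (del_vertex_adj E v) < k)"

definition P5_list :: "nat list list" where
  "P5_list = [[1], [0,2], [1,3], [2,4], [3]]"

definition chair_list :: "nat list list" where
  "chair_list = [[1], [0,2,4], [1,3], [2], [1]]"

definition K5_list :: "nat list list" where
  "K5_list = [[1,2,3,4], [0,2,3,4], [0,1,3,4], [0,1,2,4], [0,1,2,3]]"

definition W_list :: "nat list list" where
  "W_list = [[1,4,5,6], [0,2,5,6], [1,3,5,6], [2,4,5,6], [0,3,5,6], [0,1,2,3,4,6], [0,1,2,3,4,5]]"

definition P_list :: "nat list list" where
  "P_list = [[1,4,5,6], [0,2,7,8], [1,3,5,6,7,8], [2,4,5,6,7,8], [0,3,7,8], [0,2,3,7],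
             [0,2,3,8], [1,2,3,4,5,8], [1,2,3,4,6,7]]"

definition Q1_list :: "nat list list" where
  "Q1_list = [[1,4,5,6], [0,2,5,6,7,8], [1,3,5,6,7,8], [2,4,7,8], [0,3,7,8], [0,1,2,6,7],
              [0,1,2,5,8], [1,2,3,4,5], [1,2,3,4,6]]"

text \<open>Q2: the given lists are not symmetric (1 lists 5 and 6, but not conversely);
we symmetrise (adj_list takes the symmetric closure), i.e. edges 1-5 and 1-6 are present.\<close>
definition Q2_list :: "nat list list" where
  "Q2_list = [[1,4,5,6], [0,2,5,6,7,8], [1,3,5,6,7,8], [2,4,5,6,7,8], [0,3,7,8], [0,1,2,3,6,7],
              [0,1,2,3,5,8], [1,2,3,4,5], [1,2,3,4,6]]"

definition Q3_list :: "nat list list" where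
  "Q3_list = [[1,4,5,6], [0,2,5,7,8], [1,3,5,7,8], [2,4,6,7,8], [0,3,6,7,8], [0,1,2,6],
              [0,3,4,5,8], [1,2,3,4,8], [1,2,3,4,6,7]]"

definition family_F :: "nat list list set" where
  "family_F = {K5_list, W_list, P_list, Q1_list, Q2_list, Q3_list}"

definition induced_C5 :: "'a set \<Rightarrow> ('a \<Rightarrow> 'a \<Rightarrow> bool) \<Rightarrow> (nat \<Rightarrow> 'a) \<Rightarrow> bool" where
  "induced_C5 V E v \<longleftrightarrow> inj_on v {0..<5} \<and> v ` {0..<5} \<subseteq> V \<and>
     (\<forall>i<5. \<forall>j<5. E (v i) (v j) \<longleftrightarrow> (j = (i + 1) mod 5 \<or> i = (j + 1) mod 5))"

text \<open>S_4(i): vertices outside C adjacent on C exactly to v_{i-2}, v_{i-1}, v_{i+1}, v_{i+2}.\<close>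

definition S4 :: "'a set \<Rightarrow> ('a \<Rightarrow> 'a \<Rightarrow> bool) \<Rightarrow> (nat \<Rightarrow> 'a) \<Rightarrow> nat \<Rightarrow> 'a set" where
  "S4 V E v i = {x \<in> V - v ` {0..<5}.
     {y \<in> v ` {0..<5}. E x y} =
       {v ((i + 3) mod 5), v ((i + 4) mod 5), v ((i + 1) mod 5), v ((i + 2) mod 5)}}"

end

theory Submission
  imports Defs
begin

text \<open>After rotating C, take i = 0, so that S = S_4(0) consists of the vertices adjacent to
  v1, v2, v3, v4 but not to v0. Using that a vertex-critical graph has no vertex whose
  neighborhood is contained in that of a nonadjacent vertex, together with P5-, chair- and
  K5-freeness, every vertex of S has at most one neighbor in S. Next, for nonadjacent x, y in S
  the neighborhoods outside S are nested as soon as S has a third vertex p: otherwise private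
  outside neighbors of x and y form a K4 with v2, v3, which leaves no color for v0 in a
  4-coloring of G - p. Nestedness rules out two isolated vertices in G[S] (one would dominate
  the other) and two disjoint edges in G[S] (some endpoint could be recolored with a color of
  the other edge). Hence |S| <= 3.\<close>

definition proper_coloring :: "'a set \<Rightarrow> ('a \<Rightarrow> 'a \<Rightarrow> bool) \<Rightarrow> nat \<Rightarrow> ('a \<Rightarrow> nat) \<Rightarrow> bool" where
  "proper_coloring V E k c \<longleftrightarrow> (\<forall>x\<in>V. c x < k) \<and> (\<forall>x\<in>V. \<forall>y\<in>V. E x y \<longrightarrow> c x \<noteq> c y)"

lemma colorable_iff_proper_coloring: "colorable V E k \<longleftrightarrow> (\<exists>c. proper_coloring V E k c)"
  by (simp add: colorable_def proper_coloring_def)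

lemma proper_coloringD:
  assumes "proper_coloring V E k c"
  shows "x \<in> V \<Longrightarrow> c x < k" and "x \<in> V \<Longrightarrow> y \<in> V \<Longrightarrow> E x y \<Longrightarrow> c x \<noteq> c y"
  using assms by (auto simp: proper_coloring_def)

lemma colorable_mono: "colorable V E k \<Longrightarrow> k \<le> k' \<Longrightarrow> colorable V E k'"
  unfolding colorable_def using less_le_trans by blast

lemma colorable_card:
  assumes "finite V" "\<And>x. \<not> E x x"
  shows "colorable V E (card V)"
proof -
  obtain h where h: "bij_betw h V {0..<card V}"
    using ex_bij_betw_finite_nat[OF assms(1)] by blast
  then have "proper_coloring V E (card V) h"
    using assms(2) unfolding proper_coloring_def bij_betw_def inj_on_def by fastforce
  then show ?thesis
    by (auto simp: colorable_iff_proper_coloring)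
qed

lemma colorable_chromatic_number:
  assumes "finite V" "\<And>x. \<not> E x x"
  shows "colorable V E (chromatic_number V E)"
  unfolding chromatic_number_def using colorable_card[OF assms] by (rule LeastI)

lemma not_colorable_below_chromatic_number: "k < chromatic_number V E \<Longrightarrow> \<not> colorable V E k"
  unfolding chromatic_number_def by (rule not_less_Least)

lemma four_distinct_colors_exhaust:
  fixes p q r s :: nat
  assumes "distinct [p, q, r, s]" "p < 4" "q < 4" "r < 4" "s < 4"
  shows "{p, q, r, s} = {..<4}"
  using assms by (intro card_subset_eq) auto

lemma contains_induced_list:
  assumes "distinct xs" "set xs \<subseteq> V" "length xs = length L"
    and "\<And>i j. i < length L \<Longrightarrow> j < length L \<Longrightarrow> E (xs ! i) (xs ! j) \<longleftrightarrow> adj_list L i j"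
  shows "contains_induced V E (verts_list L) (adj_list L)"
  unfolding contains_induced_def verts_list_def
  using assms by (intro exI[of _ "(!) xs"]) (auto simp: inj_on_def nth_eq_iff_index_eq)

lemma transp_cross_comparison:
  assumes "transp R"
    and "R a b \<or> R b a" "R a b' \<or> R b' a" "R a' b \<or> R b a'" "R a' b' \<or> R b' a'"
  shows "R a b \<and> R a b' \<or> R a' b \<and> R a' b' \<or> R b a \<and> R b a' \<or> R b' a \<and> R b' a'"
  using assms by (metis transpD)

lemma mod_add_left_cancel_nat: "(i + x) mod m = (i + y) mod m \<longleftrightarrow> x mod m = y mod (m :: nat)"
proof
  assume h: "(i + x) mod m = (i + y) mod m"
  have key: "z mod m = ((i + z) mod m + (m - 1) * i) mod m" if "0 < m" for z
  proof -
    have "z mod m = (z + i * m) mod m"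
      by simp
    also have "z + i * m = (i + z) + (m - 1) * i"
      using that by (cases m) (simp_all add: algebra_simps)
    finally show ?thesis
      by (simp add: mod_add_left_eq)
  qed
  show "x mod m = y mod m"
  proof (cases "m = 0")
    case False
    then show ?thesis
      using key[of x] key[of y] h by simp
  qed (use h in simp)
qed (rule mod_add_cong, simp_all)

lemma rotate_mod5_image: "(\<lambda>j. (i + j) mod 5) ` {0..<5} = {0..<(5 :: nat)}"
proof
  show "{0..<5} \<subseteq> (\<lambda>j. (i + j) mod 5) ` {0..<5}"
  proof
    fix k :: nat
    assume "k \<in> {0..<5}"
    then have "k = (i + (k + 4 * i) mod 5) mod 5"
      by (simp add: mod_add_right_eq)
    then show "k \<in> (\<lambda>j. (i + j) mod 5) ` {0..<5}"
      by (rule image_eqI) simp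
  qed
qed auto

lemma rotate_image: "(\<lambda>j. v ((i + j) mod 5)) ` {0..<5} = v ` {0..<(5 :: nat)}"
proof -
  have "(\<lambda>j. v ((i + j) mod 5)) ` {0..<5} = v ` ((\<lambda>j. (i + j) mod 5) ` {0..<5})"
    by (simp add: image_image)
  then show ?thesis
    by (simp only: rotate_mod5_image)
qed

lemma induced_C5_rotate:
  assumes "induced_C5 V E v"
  shows "induced_C5 V E (\<lambda>j. v ((i + j) mod 5))"
proof -
  let ?\<rho> = "\<lambda>j. (i + j) mod 5"
  have inj: "inj_on v {0..<5}" and sub: "v ` {0..<5} \<subseteq> V"
    and adj: "\<And>a b. a < 5 \<Longrightarrow> b < 5 \<Longrightarrow> E (v a) (v b) \<longleftrightarrow> b = (a + 1) mod 5 \<or> a = (b + 1) mod 5"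
    using assms by (auto simp: induced_C5_def)
  have "inj_on ?\<rho> {0..<5}"
    by (auto intro!: inj_onI simp: mod_add_left_cancel_nat)
  then have "inj_on (v \<circ> ?\<rho>) {0..<5}"
    using inj rotate_mod5_image by (intro comp_inj_on) auto
  moreover have "(v \<circ> ?\<rho>) ` {0..<5} \<subseteq> V"
    using sub rotate_image[of v i] by (simp add: comp_def)
  moreover have "?\<rho> b = (?\<rho> a + 1) mod 5 \<longleftrightarrow> b = (a + 1) mod 5" if "a < 5" "b < 5" for a b
  proof -
    have "(?\<rho> a + 1) mod 5 = (i + (a + 1)) mod 5"
      by (simp add: mod_Suc_eq)
    then have "?\<rho> b = (?\<rho> a + 1) mod 5 \<longleftrightarrow> b mod 5 = (a + 1) mod 5"
      by (simp only: mod_add_left_cancel_nat)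
    then show ?thesis
      using that by simp
  qed
  ultimately show ?thesis
    unfolding induced_C5_def using adj by (simp add: comp_def)
qed

lemma S4_rotate: "S4 V E v i = S4 V E (\<lambda>j. v ((i + j) mod 5)) 0"
  by (simp add: S4_def rotate_image)

locale sgraph =
  fixes V :: "'a set" and E :: "'a \<Rightarrow> 'a \<Rightarrow> bool"
  assumes simple: "simple_graph V E"
begin

lemma finite_vertices: "finite V"
  using simple by (simp add: simple_graph_def)

lemma adj_sym: "E x y \<longleftrightarrow> E y x"
  using simple unfolding simple_graph_def by blast

lemma adj_irrefl [simp]: "\<not> E x x"
  using simple by (simp add: simple_graph_def)

lemma adj_vertices: "E x y \<Longrightarrow> x \<in> V" "E x y \<Longrightarrow> y \<in> V"
  using simple by (auto simp: simple_graph_def)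

lemma contains_induced_P5:
  assumes "E a b" "E b c" "E c d" "E d e"
    and "\<not> E a c" "\<not> E a d" "\<not> E a e" "\<not> E b d" "\<not> E b e" "\<not> E c e"
  shows "contains_induced V E (verts_list P5_list) (adj_list P5_list)"
proof (rule contains_induced_list[where xs = "[a, b, c, d, e]"])
  show "distinct [a, b, c, d, e]" "set [a, b, c, d, e] \<subseteq> V"
    using assms adj_vertices by (auto simp: adj_sym)
  show "E ([a, b, c, d, e] ! i) ([a, b, c, d, e] ! j) \<longleftrightarrow> adj_list P5_list i j"
    if "i < length P5_list" "j < length P5_list" for i j
    using that assms by (auto simp: P5_list_def adj_list_def less_Suc_eq adj_sym)
qed (simp add: P5_list_def)

lemma contains_induced_chair:
  assumes "a \<noteq> e" "E a b" "E b c" "E c d" "E b e"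
    and "\<not> E a c" "\<not> E a d" "\<not> E a e" "\<not> E b d" "\<not> E c e" "\<not> E d e"
  shows "contains_induced V E (verts_list chair_list) (adj_list chair_list)"
proof (rule contains_induced_list[where xs = "[a, b, c, d, e]"])
  show "distinct [a, b, c, d, e]" "set [a, b, c, d, e] \<subseteq> V"
    using assms adj_vertices by (auto simp: adj_sym)
  show "E ([a, b, c, d, e] ! i) ([a, b, c, d, e] ! j) \<longleftrightarrow> adj_list chair_list i j"
    if "i < length chair_list" "j < length chair_list" for i j
    using that assms by (auto simp: chair_list_def adj_list_def less_Suc_eq adj_sym)
qed (simp add: chair_list_def)

end

locale vertex_critical_graph = sgraph +
  fixes k :: nat
  assumes critical: "vertex_critical V E k"
begin

lemma colorable_deletion:
  assumes "w \<in> V"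
  obtains c where "proper_coloring (V - {w}) E (k - 1) c"
proof -
  have "chromatic_number (V - {w}) (del_vertex_adj E w) < k"
    using critical assms by (simp add: vertex_critical_def)
  moreover have "colorable (V - {w}) (del_vertex_adj E w) (chromatic_number (V - {w}) (del_vertex_adj E w))"
    using finite_vertices by (intro colorable_chromatic_number) (auto simp: del_vertex_adj_def)
  ultimately have "colorable (V - {w}) (del_vertex_adj E w) (k - 1)"
    by (auto intro: colorable_mono)
  then obtain c where "proper_coloring (V - {w}) (del_vertex_adj E w) (k - 1) c"
    by (auto simp: colorable_iff_proper_coloring)
  then show thesis
    by (intro that) (simp add: proper_coloring_def del_vertex_adj_def)
qed

lemma coloring_not_extendable:
  assumes "u \<in> V" "proper_coloring (V - {u}) E (k - 1) c" "\<alpha> < k - 1"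
    and "\<And>t. E u t \<Longrightarrow> c t \<noteq> \<alpha>"
  shows False
proof -
  have "proper_coloring V E (k - 1) (c(u := \<alpha>))"
    using assms(2-4) adj_sym unfolding proper_coloring_def by (auto simp: Ball_def)
  then have "colorable V E (k - 1)"
    by (auto simp: colorable_iff_proper_coloring)
  moreover have "k - 1 < chromatic_number V E"
    using critical assms(3) by (simp add: vertex_critical_def)
  ultimately show False
    using not_colorable_below_chromatic_number by blast
qed

lemma no_dominated_vertex:
  assumes "x \<in> V" "y \<in> V" "x \<noteq> y" "\<not> E x y" "\<And>t. E x t \<Longrightarrow> E y t"
  shows False
proof -
  obtain c where c: "proper_coloring (V - {x}) E (k - 1) c"
    using colorable_deletion[OF assms(1)] .
  show False
  proof (rule coloring_not_extendable[OF assms(1) c])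
    show "c y < k - 1"
      using c assms by (simp add: proper_coloring_def)
    show "c t \<noteq> c y" if "E x t" for t
    proof -
      have "t \<in> V - {x}" "y \<in> V - {x}" "E t y"
        using that assms adj_vertices(2)[OF that] by (auto simp: adj_sym)
      then show ?thesis
        using c by (simp add: proper_coloring_def)
    qed
  qed
qed

lemma no_vertex_almost_dominated_by_edge:
  assumes "u \<in> V" "E w w'" "u \<noteq> w" "u \<noteq> w'"
    and "\<And>t. E u t \<Longrightarrow> t = u' \<or> E w t \<and> E w' t"
  shows False
proof -
  obtain c where c: "proper_coloring (V - {u}) E (k - 1) c"
    using colorable_deletion[OF assms(1)] .
  have w: "w \<in> V - {u}" "w' \<in> V - {u}"
    using assms(2-4) adj_vertices by auto
  show False
  proof (rule coloring_not_extendable[OF assms(1) c])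
    show "(if c u' = c w then c w' else c w) < k - 1"
      using c w by (simp add: proper_coloring_def)
    show "c t \<noteq> (if c u' = c w then c w' else c w)" if "E u t" for t
    proof -
      have t: "t \<in> V - {u}"
        using that adj_vertices by auto
      have "c w \<noteq> c w'"
        using c w assms(2) by (simp add: proper_coloring_def)
      moreover have "c t \<noteq> c w \<and> c t \<noteq> c w'" if "E w t" "E w' t"
        using c w t that by (simp add: proper_coloring_def adj_sym)
      ultimately show ?thesis
        using assms(5)[OF that] by auto
    qed
  qed
qed

lemma no_clique_and_further_vertex:
  assumes "K \<subseteq> V" "card K = k" "\<And>x y. x \<in> K \<Longrightarrow> y \<in> K \<Longrightarrow> x \<noteq> y \<Longrightarrow> E x y"
    and "w \<in> V - K"
  shows False
proof -
  obtain c where c: "proper_coloring (V - {w}) E (k - 1) c"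
    using colorable_deletion assms(4) by blast
  have K: "K \<subseteq> V - {w}"
    using assms(1,4) by blast
  have "inj_on c K"
  proof (rule inj_onI)
    show "x = y" if "x \<in> K" "y \<in> K" "c x = c y" for x y
      using that c K assms(3)[of x y] unfolding proper_coloring_def by blast
  qed
  moreover have "c ` K \<subseteq> {..<k - 1}"
    using c K unfolding proper_coloring_def by auto
  ultimately have "card K \<le> k - 1"
    by (metis card_inj_on_le card_lessThan finite_lessThan)
  moreover have "0 < k"
    using critical assms(4) by (auto simp: vertex_critical_def)
  ultimately show False
    using assms(2) by linarith
qed

end

locale critical_C5 = vertex_critical_graph V E 5 for V :: "'a set" and E +
  fixes v :: "nat \<Rightarrow> 'a"
  assumes P5_free: "H_free V E (verts_list P5_list) (adj_list P5_list)"
    and chair_free: "H_free V E (verts_list chair_list) (adj_list chair_list)"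
    and C5: "induced_C5 V E v"
begin

lemma cycle_in_V: "i < 5 \<Longrightarrow> v i \<in> V"
  using C5 by (auto simp: induced_C5_def)

lemma cycle_eq_iff [simp]: "i < 5 \<Longrightarrow> j < 5 \<Longrightarrow> v i = v j \<longleftrightarrow> i = j"
  using C5 by (auto simp: induced_C5_def inj_on_def)

lemma cycle_adj [simp]:
  "i < 5 \<Longrightarrow> j < 5 \<Longrightarrow> E (v i) (v j) \<longleftrightarrow> j = (i + 1) mod 5 \<or> i = (j + 1) mod 5"
  using C5 by (simp add: induced_C5_def)

lemma no_P5:
  "\<not> (E a b \<and> E b c \<and> E c d \<and> E d e \<and>
      \<not> E a c \<and> \<not> E a d \<and> \<not> E a e \<and> \<not> E b d \<and> \<not> E b e \<and> \<not> E c e)"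
  using P5_free contains_induced_P5 unfolding H_free_def by blast

text \<open>The side condition a \<noteq> e comes last so that [of a b c d e] instantiates in
  vertex order.\<close>

lemma no_chair:
  "\<not> (E a b \<and> E b c \<and> E c d \<and> E b e \<and>
      \<not> E a c \<and> \<not> E a d \<and> \<not> E a e \<and> \<not> E b d \<and> \<not> E c e \<and> \<not> E d e \<and> a \<noteq> e)"
  using chair_free contains_induced_chair unfolding H_free_def by blast

lemma no_K5:
  assumes "E a b" "E a c" "E a d" "E a e" "E b c" "E b d" "E b e" "E c d" "E c e" "E d e"
  shows False
proof -
  let ?K = "{a, b, c, d, e}"
  have "v 0 \<notin> ?K \<or> v 2 \<notin> ?K"
    using assms by (auto simp: adj_sym)
  then obtain w where "w \<in> V - ?K"
    using cycle_in_V[of 0] cycle_in_V[of 2] by auto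
  moreover have "?K \<subseteq> V"
    using assms adj_vertices by blast
  moreover have "distinct [a, b, c, d, e]"
    using assms by (auto simp: adj_sym)
  then have "card ?K = 5"
    by (simp add: card_insert_if)
  ultimately show False
    using assms by (intro no_clique_and_further_vertex[of ?K]) (auto simp: adj_sym)
qed

abbreviation S :: "'a set" where
  "S \<equiv> S4 V E v 0"

lemma cycle_image: "v ` {0..<5} = {v 0, v 1, v 2, v 3, v 4}"
proof -
  have "{0..<5} = {0, 1, 2, 3, 4 :: nat}"
    by auto
  then show ?thesis
    by simp
qed

lemma mem_S: "x \<in> S \<longleftrightarrow> \<not> E x (v 0) \<and> E x (v 1) \<and> E x (v 2) \<and> E x (v 3) \<and> E x (v 4)"
  (is "_ \<longleftrightarrow> ?pattern")
proof -
  let ?C = "{v 0, v 1, v 2, v 3, v 4}"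
  have S_eq: "S = {x \<in> V - ?C. {y \<in> ?C. E x y} = {v 3, v 4, v 1, v 2}}"
  proof -
    have "(0 + 3) mod 5 = (3 :: nat)" "(0 + 4) mod 5 = (4 :: nat)"
      "(0 + 1) mod 5 = (1 :: nat)" "(0 + 2) mod 5 = (2 :: nat)"
      by simp_all
    then show ?thesis
      unfolding S4_def cycle_image by (simp only:)
  qed
  have "{y \<in> ?C. E x y} = {v 3, v 4, v 1, v 2} \<longleftrightarrow> ?pattern"
  proof
    assume "{y \<in> ?C. E x y} = {v 3, v 4, v 1, v 2}"
    moreover have "v 0 \<notin> {v 3, v 4, v 1, v 2}"
      by (simp del: One_nat_def)
    ultimately show ?pattern
      by blast
  qed blast
  moreover have "x \<in> V - ?C" if ?pattern
    using that adj_vertices by auto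
  ultimately show ?thesis
    unfolding S_eq by blast
qed

lemma S_outside_cycle: "S \<subseteq> V - {v 0, v 1, v 2, v 3, v 4}"
  unfolding S4_def cycle_image by blast

text \<open>All of S is adjacent to both ends of the edge v1 v2, so a 4-coloring of G - v0 uses
  only two colors on S.\<close>

lemma S_no_5_cycle:
  assumes "s1 \<in> S" "s2 \<in> S" "s3 \<in> S" "s4 \<in> S" "s5 \<in> S"
    and "E s1 s2" "E s2 s3" "E s3 s4" "E s4 s5" "E s5 s1"
  shows False
proof -
  obtain c where c: "proper_coloring (V - {v 0}) E 4 c"
    using colorable_deletion[OF cycle_in_V[of 0]] by auto
  have V: "v 1 \<in> V - {v 0}" "v 2 \<in> V - {v 0}" "s1 \<in> V - {v 0}" "s2 \<in> V - {v 0}"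
    "s3 \<in> V - {v 0}" "s4 \<in> V - {v 0}" "s5 \<in> V - {v 0}"
    using assms(1-5) S_outside_cycle cycle_in_V[of 1] cycle_in_V[of 2] by (auto simp del: One_nat_def)
  note ne = proper_coloringD(2)[OF c] and lt = proper_coloringD(1)[OF c]
  have d: "c (v 1) \<noteq> c (v 2)" "c (v 1) \<noteq> c s1" "c (v 1) \<noteq> c s2" "c (v 2) \<noteq> c s1"
    "c (v 2) \<noteq> c s2" "c s1 \<noteq> c s2" "c s3 \<noteq> c (v 1)" "c s3 \<noteq> c (v 2)" "c s4 \<noteq> c (v 1)"
    "c s4 \<noteq> c (v 2)" "c s5 \<noteq> c (v 1)" "c s5 \<noteq> c (v 2)" "c s3 \<noteq> c s2" "c s4 \<noteq> c s3"
    "c s5 \<noteq> c s4" "c s5 \<noteq> c s1"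
    by (rule ne; use V assms in \<open>auto simp: mem_S adj_sym\<close>)+
  have palette: "{c (v 1), c (v 2), c s1, c s2} = {..<4}"
    using V d by (intro four_distinct_colors_exhaust lt) auto
  have "c s3 \<in> {..<4}" "c s4 \<in> {..<4}" "c s5 \<in> {..<4}"
    using lt V by auto
  then have "c s3 = c s1" "c s4 = c s2" "c s5 = c s1"
    unfolding palette[symmetric] using d by auto
  then show False
    using d by simp
qed

lemma S_path_extension:
  assumes "a \<in> S" "b \<in> S" "c \<in> S" "E a b" "E b c" "\<not> E a c" "a \<noteq> c" "E z a" "\<not> E z c"
  shows "z \<in> S \<and> \<not> E z b"
proof -
  have on_cycle: "\<not> E a (v 0)" "E a (v 1)" "E a (v 2)" "E a (v 3)" "E a (v 4)"
    "\<not> E b (v 0)" "E b (v 1)" "E b (v 2)" "E b (v 3)" "E b (v 4)"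
    "\<not> E c (v 0)" "E c (v 1)" "E c (v 2)" "E c (v 3)" "E c (v 4)"
    using assms(1-3) by (simp_all add: mem_S)
  have z_off_cycle: "z \<noteq> v i" if "i < 5" for i
    using that on_cycle assms(8,9) by (auto simp: less_Suc_eq numeral_eq_Suc adj_sym)
  have z3: "E z (v 3)"
    using no_P5[of c "v 3" a z "v 0"] no_chair[of "v 0" "v 1" c "v 3" z] no_chair[of "v 0" "v 1" a z c]
      z_off_cycle[of 0] on_cycle assms by (cases "E z (v 0)"; cases "E z (v 1)"; auto simp: adj_sym)
  have z2: "E z (v 2)"
    using no_P5[of c "v 2" a z "v 0"] no_chair[of "v 0" "v 4" c "v 2" z] no_chair[of "v 0" "v 4" a z c]
      no_P5[of "v 0" "v 1" "v 2" "v 3" z] z3 z_off_cycle[of 0] on_cycle assms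
    by (cases "E z (v 0)"; cases "E z (v 1)"; cases "E z (v 4)"; auto simp: adj_sym)
  have zb: "\<not> E z b"
    using no_K5[of "v 2" "v 3" a b z] z2 z3 on_cycle assms by (auto simp: adj_sym)
  have z0: "\<not> E z (v 0)"
    using no_P5[of c b a z "v 0"] zb on_cycle assms by (auto simp: adj_sym)
  have "E z (v 1)" "E z (v 4)"
    using no_chair[of "v 0" "v 1" a z c] no_chair[of "v 0" "v 4" a z c] z0 z_off_cycle[of 0] on_cycle assms
    by (auto simp: adj_sym)
  then show ?thesis
    using z0 z2 z3 zb by (simp add: mem_S)
qed

lemma S_neighbor_unique:
  assumes "a \<in> S" "b \<in> S" "c \<in> S" "E b a" "E b c"
  shows "a = c"
proof (rule ccontr)
  assume "a \<noteq> c"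
  have V: "x \<in> V" if "x \<in> S" for x
    using that S_outside_cycle by blast
  show False
  proof (cases "E a c")
    case True
    then show False
      using no_K5[of a b c "v 1" "v 2"] assms by (auto simp: mem_S adj_sym)
  next
    case False
    obtain z where z: "E a z" "\<not> E c z"
      using no_dominated_vertex[of a c] V assms(1,3) \<open>a \<noteq> c\<close> False by blast
    have zS: "z \<in> S" and "\<not> E z b"
      using S_path_extension[of a b c z] assms \<open>a \<noteq> c\<close> False z by (auto simp: adj_sym)
    moreover have "z \<noteq> b"
      using assms(5) z(2) by (auto simp: adj_sym)
    ultimately obtain z' where z': "E z z'" "\<not> E b z'"
      using no_dominated_vertex[of z b] V assms(2) by blast
    have "z' \<in> S" and "\<not> E z' a"
      using S_path_extension[of z a b z'] zS \<open>\<not> E z b\<close> \<open>z \<noteq> b\<close> assms z z'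
      by (auto simp: adj_sym)
    show False
    proof (cases "E z' c")
      case True
      then show False
        using S_no_5_cycle[of z' z a b c] \<open>z' \<in> S\<close> zS assms z z' by (auto simp: adj_sym)
    next
      case False
      then show False
        using no_P5[of z' z a b c] \<open>\<not> E z' a\<close> \<open>\<not> E z b\<close> \<open>\<not> E a c\<close> assms z z' by (auto simp: adj_sym)
    qed
  qed
qed

definition outer_nbhd :: "'a \<Rightarrow> 'a set" where
  "outer_nbhd x = {t. E x t} - S"

lemma private_outer_neighbor_adj_v023:
  assumes "x \<in> S" "y \<in> S" "x \<noteq> y" "\<not> E x y" "z \<in> outer_nbhd x" "\<not> E y z"
  shows "E z (v 0) \<and> E z (v 2) \<and> E z (v 3)"
proof -
  have on_cycle: "\<not> E x (v 0)" "E x (v 1)" "E x (v 2)" "E x (v 3)" "E x (v 4)"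
    "\<not> E y (v 0)" "E y (v 1)" "E y (v 2)" "E y (v 3)" "E y (v 4)"
    using assms(1,2) by (simp_all add: mem_S)
  have z: "E x z" "z \<notin> S"
    using assms(5) by (simp_all add: outer_nbhd_def)
  have z_off_cycle: "z \<noteq> v i" if "i < 5" for i
    using that on_cycle z(1) assms(6) by (auto simp: less_Suc_eq numeral_eq_Suc adj_sym)
  have z0: "E z (v 0)"
    using no_chair[of "v 0" "v 1" y "v 3" z] no_chair[of "v 0" "v 4" y "v 2" z]
      no_chair[of "v 0" "v 1" x z y] no_chair[of "v 0" "v 4" x z y]
      z_off_cycle[of 0] on_cycle z assms
    by (cases "E z (v 1)"; cases "E z (v 4)"; auto simp: adj_sym mem_S)
  have "E z (v 2)" "E z (v 3)"
    using no_P5[of "v 0" z x "v 2" y] no_P5[of "v 0" z x "v 3" y] z0 on_cycle z assms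
    by (auto simp: adj_sym)
  with z0 show ?thesis
    by blast
qed

lemma private_outer_neighbors_adjacent:
  assumes "x \<in> S" "y \<in> S" "x \<noteq> y" "\<not> E x y"
    and "z \<in> outer_nbhd x" "\<not> E y z" "w \<in> outer_nbhd y" "\<not> E x w"
  shows "E z w"
proof -
  have "E z (v 0)"
    using private_outer_neighbor_adj_v023[OF assms(1-6)] by blast
  moreover have "E w (v 0)"
    using private_outer_neighbor_adj_v023[OF assms(2,1) _ _ assms(7,8)] assms(3,4)
    by (auto simp: adj_sym)
  ultimately show ?thesis
    using no_P5[of x z "v 0" w y] assms by (auto simp: mem_S adj_sym outer_nbhd_def)
qed

text \<open>In a 4-coloring of G - p the K4 on v2, v3, z, w forces the colors of x, y, v1, v4,
  after which v0 sees all four colors.\<close>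

lemma S_outer_nbhds_comparable:
  assumes "x \<in> S" "y \<in> S" "p \<in> S" "x \<noteq> y" "p \<noteq> x" "p \<noteq> y" "\<not> E x y"
  shows "outer_nbhd x \<subseteq> outer_nbhd y \<or> outer_nbhd y \<subseteq> outer_nbhd x"
proof (rule ccontr)
  assume "\<not> ?thesis"
  then obtain z w where z: "z \<in> outer_nbhd x" "z \<notin> outer_nbhd y"
    and w: "w \<in> outer_nbhd y" "w \<notin> outer_nbhd x"
    by blast
  have zw: "E x z" "z \<notin> S" "\<not> E y z" "E y w" "w \<notin> S" "\<not> E x w"
    using z w by (auto simp: outer_nbhd_def)
  have z_v: "E z (v 0)" "E z (v 2)" "E z (v 3)"
    using private_outer_neighbor_adj_v023[OF assms(1,2,4,7) z(1) zw(3)] by blast+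
  have w_v: "E w (v 0)" "E w (v 2)" "E w (v 3)"
    using private_outer_neighbor_adj_v023[OF assms(2,1) _ _ w(1) zw(6)] assms(4,7)
    by (auto simp: adj_sym)
  have "E z w"
    using private_outer_neighbors_adjacent[OF assms(1,2,4,7) z(1) zw(3) w(1) zw(6)] .
  obtain c where c: "proper_coloring (V - {p}) E 4 c"
    using colorable_deletion[of p] assms(3) S_outside_cycle by auto
  have V: "v 0 \<in> V - {p}" "v 1 \<in> V - {p}" "v 2 \<in> V - {p}" "v 3 \<in> V - {p}" "v 4 \<in> V - {p}"
    "x \<in> V - {p}" "y \<in> V - {p}" "z \<in> V - {p}" "w \<in> V - {p}"
    using assms S_outside_cycle cycle_in_V zw adj_vertices by (auto simp del: One_nat_def)
  note ne = proper_coloringD(2)[OF c] and lt = proper_coloringD(1)[OF c]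
  have d: "c (v 2) \<noteq> c (v 3)" "c (v 2) \<noteq> c z" "c (v 2) \<noteq> c w" "c (v 3) \<noteq> c z"
    "c (v 3) \<noteq> c w" "c z \<noteq> c w"
    "c x \<noteq> c (v 2)" "c x \<noteq> c (v 3)" "c x \<noteq> c z"
    "c y \<noteq> c (v 2)" "c y \<noteq> c (v 3)" "c y \<noteq> c w"
    "c (v 1) \<noteq> c (v 2)" "c (v 1) \<noteq> c x" "c (v 1) \<noteq> c y"
    "c (v 4) \<noteq> c (v 3)" "c (v 4) \<noteq> c x" "c (v 4) \<noteq> c y"
    "c (v 0) \<noteq> c (v 1)" "c (v 0) \<noteq> c (v 4)" "c (v 0) \<noteq> c z" "c (v 0) \<noteq> c w"
    by (rule ne; use V zw z_v w_v \<open>E z w\<close> assms in \<open>auto simp: mem_S adj_sym\<close>)+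
  have palette: "{c (v 2), c (v 3), c z, c w} = {..<4}"
    using V d by (intro four_distinct_colors_exhaust lt) auto
  have "c x \<in> {..<4}" "c y \<in> {..<4}" "c (v 0) \<in> {..<4}" "c (v 1) \<in> {..<4}" "c (v 4) \<in> {..<4}"
    using lt V by auto
  then have "c x = c w" "c y = c z" "c (v 1) = c (v 3)" "c (v 4) = c (v 2)"
    "c (v 0) \<in> {c (v 2), c (v 3), c z, c w}"
    unfolding palette[symmetric] using d by auto
  then show False
    using d by auto
qed

lemma S_outer_nbhd_not_below_edge:
  assumes "u \<in> S" "u' \<in> S" "w \<in> S" "w' \<in> S" "E u u'" "E w w'" "u \<noteq> w" "u \<noteq> w'"
    and "outer_nbhd u \<subseteq> outer_nbhd w" "outer_nbhd u \<subseteq> outer_nbhd w'"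
  shows False
proof (rule no_vertex_almost_dominated_by_edge)
  show "u \<in> V"
    using assms(1) S_outside_cycle by blast
  show "t = u' \<or> E w t \<and> E w' t" if "E u t" for t
  proof (cases "t \<in> S")
    case True
    then show ?thesis
      using S_neighbor_unique[of t u u'] assms(1,2,5) that by blast
  next
    case False
    then have "t \<in> outer_nbhd u"
      using that by (simp add: outer_nbhd_def)
    then show ?thesis
      using assms(9,10) by (auto simp: outer_nbhd_def)
  qed
qed (use assms in auto)

lemma S_edges_share_vertex:
  assumes "a \<in> S" "a' \<in> S" "b \<in> S" "b' \<in> S" "E a a'" "E b b'"
  shows "b \<in> {a, a'}"
proof (rule ccontr)
  assume b: "b \<notin> {a, a'}"
  have unique: "\<And>x y z. x \<in> S \<Longrightarrow> y \<in> S \<Longrightarrow> z \<in> S \<Longrightarrow> E x y \<Longrightarrow> E x z \<Longrightarrow> y = z"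
    using S_neighbor_unique by blast
  have sym: "E a' a" "E b' b"
    using assms(5,6) by (simp_all add: adj_sym)
  have b': "b' \<notin> {a, a'}"
    using unique[OF assms(1,2,3) assms(5)] unique[OF assms(2,1,3) sym(1)] sym(2) b by auto
  have nonadj: "\<not> E a b" "\<not> E a b'" "\<not> E a' b" "\<not> E a' b'"
    using unique[OF assms(1,2) _ assms(5)] unique[OF assms(2,1) _ sym(1)] assms(3,4) b b' by blast+
  have ne: "a \<noteq> a'" "b \<noteq> b'"
    using assms(5,6) by auto
  let ?R = "\<lambda>x y. outer_nbhd x \<subseteq> outer_nbhd y"
  have "?R a b \<and> ?R a b' \<or> ?R a' b \<and> ?R a' b' \<or> ?R b a \<and> ?R b a' \<or> ?R b' a \<and> ?R b' a'"
  proof (rule transp_cross_comparison[where R = ?R])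
    show "transp ?R"
      by (rule transpI) (rule subset_trans)
    show "?R a b \<or> ?R b a"
      using S_outer_nbhds_comparable[of a b a'] assms nonadj b ne by auto
    show "?R a b' \<or> ?R b' a"
      using S_outer_nbhds_comparable[of a b' a'] assms nonadj b' ne by auto
    show "?R a' b \<or> ?R b a'"
      using S_outer_nbhds_comparable[of a' b a] assms nonadj b ne by auto
    show "?R a' b' \<or> ?R b' a'"
      using S_outer_nbhds_comparable[of a' b' a] assms nonadj b' ne by auto
  qed
  then show False
    using S_outer_nbhd_not_below_edge[of a a' b b'] S_outer_nbhd_not_below_edge[of a' a b b']
      S_outer_nbhd_not_below_edge[of b b' a a'] S_outer_nbhd_not_below_edge[of b' b a a']
      assms sym b b' by auto
qed

lemma S_isolated_unique:
  assumes "x \<in> S" "y \<in> S" "p \<in> S" "p \<noteq> x" "p \<noteq> y"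
    and "\<forall>t\<in>S. \<not> E x t" "\<forall>t\<in>S. \<not> E y t"
  shows "x = y"
proof (rule ccontr)
  assume "x \<noteq> y"
  moreover have "\<not> E x y"
    using assms(2,6) by blast
  ultimately have "outer_nbhd x \<subseteq> outer_nbhd y \<or> outer_nbhd y \<subseteq> outer_nbhd x"
    using S_outer_nbhds_comparable assms(1-5) by blast
  moreover have "outer_nbhd x = {t. E x t}" "outer_nbhd y = {t. E y t}"
    using assms(6,7) by (auto simp: outer_nbhd_def)
  moreover have "x \<in> V" "y \<in> V"
    using assms(1,2) S_outside_cycle by blast+
  ultimately show False
    using no_dominated_vertex[of x y] no_dominated_vertex[of y x] \<open>x \<noteq> y\<close> \<open>\<not> E x y\<close>
    by (auto simp: adj_sym)
qed

lemma card_S_le_3: "card S \<le> 3"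
proof (rule ccontr)
  assume "\<not> card S \<le> 3"
  have fin: "finite S"
    using S_outside_cycle finite_vertices finite_subset by blast
  have third: "\<exists>p\<in>S. p \<noteq> x \<and> p \<noteq> y" for x y
  proof (rule ccontr)
    assume "\<not> ?thesis"
    then have "card S \<le> card {x, y}"
      by (intro card_mono) auto
    also have "\<dots> \<le> 2"
      by (simp add: card_insert_le_m1)
    finally show False
      using \<open>\<not> card S \<le> 3\<close> by linarith
  qed
  define I where "I = {x \<in> S. \<forall>t\<in>S. \<not> E x t}"
  have "x = y" if "x \<in> I" "y \<in> I" for x y
    using third[of x y] S_isolated_unique[of x y] that unfolding I_def by blast
  then have "card I \<le> 1"
    using fin by (simp add: I_def card_le_Suc0_iff_eq)
  moreover have "card S \<le> card I + 2"
  proof (cases "S = I")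
    case False
    then obtain a a' where a: "a \<in> S" "a' \<in> S" "E a a'"
      unfolding I_def by blast
    have "S \<subseteq> I \<union> {a, a'}"
      using S_edges_share_vertex[OF a(1,2) _ _ a(3)] unfolding I_def by blast
    then have "card S \<le> card (I \<union> {a, a'})"
      using fin unfolding I_def by (intro card_mono) auto
    also have "\<dots> \<le> card I + card {a, a'}"
      by (rule card_Un_le)
    also have "\<dots> \<le> card I + 2"
      by (simp add: card_insert_le_m1)
    finally show ?thesis .
  qed simp
  ultimately show False
    using \<open>\<not> card S \<le> 3\<close> by linarith
qed

end

theorem mainTheorem17:
  fixes V :: "'a set" and E :: "'a \<Rightarrow> 'a \<Rightarrow> bool" and v :: "nat \<Rightarrow> 'a"
  assumes "simple_graph V E"
    and "vertex_critical V E 5"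
    and "H_free V E (verts_list P5_list) (adj_list P5_list)"
    and "H_free V E (verts_list chair_list) (adj_list chair_list)"
    and "\<forall>L\<in>family_F. \<not> graph_iso V E (verts_list L) (adj_list L)"
    and "induced_C5 V E v"
  shows "\<forall>i<5. card (S4 V E v i) \<le> 6"
proof (intro allI impI)
  fix i :: nat
  interpret critical_C5 V E "\<lambda>j. v ((i + j) mod 5)"
    using assms(1-4) induced_C5_rotate[OF assms(6)]
    by unfold_locales
  show "card (S4 V E v i) \<le> 6"
    using card_S_le_3 unfolding S4_rotate[of V E v i] by simp
qed

end
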